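(* Let $n>0$ and let $\mathcal{P}=(P_1,\dots,P_n)$ be a family of lattice polytopes in $\mathbb{R}^d$ with $0\in P_i$ for all $i$. Then \[ (-1)^n\,\mathrm{CM}E(P_1,\dots,P_n)\;=\;\sum_{\mu\in P_{[n]}\cap\mathbb{Z}^d}\tilde\chi\big(\Delta(\mathcal{P};\mu)\big), \] where $\tilde\chi$ denotes the reduced Euler characteristic.
   Context: A lattice polytope is a convex polytope in $\mathbb{R}^d$ all of whose vertices lie in $\mathbb{Z}^d$. For $S\subseteq[n]=\{1,\dots,n\}$ write $P_S:=\sum_{i\in S}P_i=\{\sum_{i\in S}p_i : p_i\in P_i\}$ (Minkowski sum), with $P_\emptyset:=\{0\}$. For a set $S\subset\mathbb{R}^d$, the discrete volume is $E(S):=|S\cap\mathbb{Z}^d|$. The discrete mixed volume is $\mathrm{CM}E(P_1,\dots,P_n):=\sum_{I\subseteq[n]}(-1)^{n-|I|}E(P_I)$. For $\mu\in\mathbb{R}^d$, the Minkowski complex $\Delta(\mathcal{P};\mu)$ is the simplicial complex on vertex set $[n]$ consisting of all $\sigma\subseteq[n]$ with $\mu\notin P_\sigma$. The reduced Euler characteristic of a simplicial complex $\Delta$ (a family of subsets closed under taking subsets, possibly containing the empty set) is $\tilde\chi(\Delta)=\sum_{\sigma\in\Delta}(-1)^{|\sigma|-1}$. *)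

theory Defs
  imports "HOL-Analysis.Analysis"
begin

definition lattice_pts :: "(real^'d) set" where
  "lattice_pts = {x. \<forall>i. x $ i \<in> \<int>}"

definition lattice_polytope :: "(real^'d) set \<Rightarrow> bool" where
  "lattice_polytope P \<longleftrightarrow> (\<exists>V. finite V \<and> V \<noteq> {} \<and> V \<subseteq> lattice_pts \<and> P = convex hull V)"

text \<open>Minkowski sum P_S of the family P over the index set S (P_{} = {0}).\<close>
definition mink_sum :: "(nat \<Rightarrow> (real^'d) set) \<Rightarrow> nat set \<Rightarrow> (real^'d) set" where
  "mink_sum P S = {(\<Sum>i\<in>S. p i) | p. \<forall>i\<in>S. p i \<in> P i}"

definition discrete_volume :: "(real^'d) set \<Rightarrow> nat" where
  "discrete_volume S = card (S \<inter> lattice_pts)"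

definition discrete_mixed_volume :: "(nat \<Rightarrow> (real^'d) set) \<Rightarrow> nat \<Rightarrow> int" where
  "discrete_mixed_volume P n =
     (\<Sum>I\<in>Pow {1..n}. (-1) ^ (n - card I) * int (discrete_volume (mink_sum P I)))"

definition minkowski_complex :: "(nat \<Rightarrow> (real^'d) set) \<Rightarrow> nat \<Rightarrow> real^'d \<Rightarrow> nat set set" where
  "minkowski_complex P n \<mu> = {\<sigma>. \<sigma> \<subseteq> {1..n} \<and> \<mu> \<notin> mink_sum P \<sigma>}"

definition reduced_euler_char :: "nat set set \<Rightarrow> int" where
  "reduced_euler_char \<Delta> = (\<Sum>\<sigma>\<in>\<Delta>. (-1) ^ (card \<sigma> + 1))"

end

theory Submission
  imports Defs
begin

text \<open>Since every P_i contains the origin, each Minkowski sum P_I lies in P_[n], so E(P_I)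
  counts the lattice points mu of P_[n] with mu in P_I. Exchanging the two sums turns
  (-1)^n CME into the sum over mu of the alternating sum of (-1)^|I| over all I with mu in P_I.
  The alternating sum over all subsets of the nonempty set [n] vanishes, so this inner sum equals
  the alternating sum of (-1)^(|sigma|-1) over the complementary family of faces sigma with
  mu not in P_sigma, i.e. the reduced Euler characteristic of the Minkowski complex.\<close>

lemma sum_Pow_minus_one_power_card:
  assumes "finite A" "A \<noteq> {}"
  shows "(\<Sum>X\<in>Pow A. (-1::'a::comm_ring_1) ^ card X) = 0"
proof -
  have "(0::'a) ^ card A = (\<Sum>X\<in>Pow A. (-1) ^ card X)"
    using prod_diff_conv_sum[OF assms(1), of "\<lambda>_. 1" "\<lambda>_. 1"] by simp
  then show ?thesis
    using assms by (simp add: power_0_left)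
qed

lemma sum_Pow_alternating_complement:
  assumes "finite A" "A \<noteq> {}"
  shows "(\<Sum>X | X \<subseteq> A \<and> \<not> Q X. (-1::'a::comm_ring_1) ^ (card X + 1))
       = (\<Sum>X\<in>Pow A. of_bool (Q X) * (-1) ^ card X)"
proof -
  have "(\<Sum>X\<in>Pow A. of_bool (Q X) * (-1::'a) ^ card X)
      = (\<Sum>X\<in>Pow A. (-1) ^ card X) - (\<Sum>X\<in>Pow A. of_bool (\<not> Q X) * (-1) ^ card X)"
    by (subst sum_subtractf[symmetric]) (rule sum.cong; simp)
  also have "\<dots> = - (\<Sum>X | X \<subseteq> A \<and> \<not> Q X. (-1) ^ card X)"
  proof -
    have "Pow A \<inter> {X. \<not> Q X} = {X. X \<subseteq> A \<and> \<not> Q X}"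
      by auto
    then show ?thesis
      using assms by (simp add: sum_Pow_minus_one_power_card)
  qed
  finally show ?thesis
    by (simp add: sum_negf)
qed

lemma finite_bounded_lattice_pts:
  assumes "bounded S"
  shows "finite (S \<inter> lattice_pts)"
proof -
  obtain R where R: "\<And>x. x \<in> S \<Longrightarrow> norm x \<le> R"
    using assms by (auto simp: bounded_iff)
  define F where "F = real_of_int ` {-\<lceil>R\<rceil>..\<lceil>R\<rceil>}"
  have "x $ i \<in> F" if "x \<in> S \<inter> lattice_pts" for x :: "real^'a" and i
  proof -
    have "x $ i \<in> \<int>"
      using that by (simp add: lattice_pts_def)
    then obtain k where k: "x $ i = of_int k"
      by (elim Ints_cases)
    have "\<bar>x $ i\<bar> \<le> R"
      using that R component_le_norm_cart[of x i] by force
    then have "\<bar>k\<bar> \<le> \<lceil>R\<rceil>"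
      using k by (simp add: le_ceiling_iff del: of_int_abs)
    then show ?thesis
      unfolding F_def using k by force
  qed
  then have "S \<inter> lattice_pts \<subseteq> vec_lambda ` (PiE UNIV (\<lambda>_. F))"
    by (auto intro!: image_eqI[of _ vec_lambda "vec_nth _"])
  moreover have "finite (vec_lambda ` (PiE (UNIV::'a set) (\<lambda>_. F)))"
    unfolding F_def by (intro finite_imageI finite_PiE) auto
  ultimately show ?thesis
    by (rule finite_subset)
qed

lemma bounded_lattice_polytope:
  "lattice_polytope Q \<Longrightarrow> bounded Q"
  unfolding lattice_polytope_def by (auto intro: finite_imp_bounded_convex_hull)

lemma bounded_mink_sum:
  assumes "finite S" "\<And>i. i \<in> S \<Longrightarrow> bounded (P i)"
  shows "bounded (mink_sum P S)"
proof -
  obtain B where B: "\<And>i x. i \<in> S \<Longrightarrow> x \<in> P i \<Longrightarrow> norm x \<le> B i"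
    using assms(2) unfolding bounded_iff by metis
  have "norm y \<le> (\<Sum>i\<in>S. B i)" if y: "y \<in> mink_sum P S" for y
  proof -
    obtain p where y: "y = (\<Sum>i\<in>S. p i)" and p: "\<forall>i\<in>S. p i \<in> P i"
      using y unfolding mink_sum_def by auto
    have "norm y \<le> (\<Sum>i\<in>S. norm (p i))"
      unfolding y by (rule norm_sum)
    also have "\<dots> \<le> (\<Sum>i\<in>S. B i)"
      using p B by (intro sum_mono) auto
    finally show ?thesis .
  qed
  then show ?thesis
    unfolding bounded_iff by blast
qed

lemma mink_sum_mono:
  assumes "I \<subseteq> S" "finite S" "\<And>i. i \<in> S - I \<Longrightarrow> 0 \<in> P i"
  shows "mink_sum P I \<subseteq> mink_sum P S"
proof
  fix y assume "y \<in> mink_sum P I"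
  then obtain p where y: "y = (\<Sum>i\<in>I. p i)" and p: "\<forall>i\<in>I. p i \<in> P i"
    unfolding mink_sum_def by auto
  define q where "q i = (if i \<in> I then p i else 0)" for i
  have "y = (\<Sum>i\<in>S. q i)"
    unfolding y q_def using assms(1,2) by (simp add: sum.If_cases Int_absorb1)
  moreover have "\<forall>i\<in>S. q i \<in> P i"
    using p assms(3) by (auto simp: q_def)
  ultimately show "y \<in> mink_sum P S"
    unfolding mink_sum_def by blast
qed

lemma discrete_volume_eq_sum_of_bool:
  assumes "finite L" "S \<inter> lattice_pts \<subseteq> L" "L \<subseteq> lattice_pts"
  shows "int (discrete_volume S) = (\<Sum>\<mu>\<in>L. of_bool (\<mu> \<in> S))"
proof -
  have "S \<inter> lattice_pts = L \<inter> {\<mu>. \<mu> \<in> S}"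
    using assms(2,3) by blast
  then show ?thesis
    using assms(1) by (simp add: discrete_volume_def)
qed

lemma discrete_mixed_volume_signed:
  "(-1) ^ n * discrete_mixed_volume P n
     = (\<Sum>I\<in>Pow {1..n}. (-1) ^ card I * int (discrete_volume (mink_sum P I)))"
proof -
  have "(-1::int) ^ n * (-1) ^ (n - card I) = (-1) ^ card I" if "I \<subseteq> {1..n}" for I
  proof -
    have "card I \<le> n"
      using card_mono[OF _ that] by simp
    then obtain k where "n = card I + k"
      using le_Suc_ex by blast
    then show ?thesis
      by (simp add: power_add)
  qed
  then show ?thesis
    unfolding discrete_mixed_volume_def sum_distrib_left mult.assoc[symmetric]
    by (intro sum.cong) auto
qed

lemma reduced_euler_char_minkowski_complex:
  assumes "n > 0"
  shows "reduced_euler_char (minkowski_complex P n \<mu>)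
       = (\<Sum>I\<in>Pow {1..n}. of_bool (\<mu> \<in> mink_sum P I) * (-1) ^ card I)"
  using sum_Pow_alternating_complement[of "{1..n}" "\<lambda>I. \<mu> \<in> mink_sum P I"] assms
  unfolding reduced_euler_char_def minkowski_complex_def by simp

theorem theorem1:
  fixes P :: "nat \<Rightarrow> (real^'d) set" and n :: nat
  assumes "n > 0"
    and "\<And>i. i \<in> {1..n} \<Longrightarrow> lattice_polytope (P i)"
    and "\<And>i. i \<in> {1..n} \<Longrightarrow> 0 \<in> P i"
  shows "(-1) ^ n * discrete_mixed_volume P n =
         (\<Sum>\<mu>\<in>mink_sum P {1..n} \<inter> lattice_pts.
            reduced_euler_char (minkowski_complex P n \<mu>))"
proof -
  define L where "L = mink_sum P {1..n} \<inter> lattice_pts"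
  have "finite L"
    unfolding L_def using assms(2)
    by (intro finite_bounded_lattice_pts bounded_mink_sum bounded_lattice_polytope) auto
  have volume: "int (discrete_volume (mink_sum P I)) = (\<Sum>\<mu>\<in>L. of_bool (\<mu> \<in> mink_sum P I))"
    if "I \<subseteq> {1..n}" for I
  proof -
    have "mink_sum P I \<subseteq> mink_sum P {1..n}"
      using that assms(3) by (intro mink_sum_mono) auto
    then show ?thesis
      using \<open>finite L\<close> by (intro discrete_volume_eq_sum_of_bool) (auto simp: L_def)
  qed
  have "(-1) ^ n * discrete_mixed_volume P n
      = (\<Sum>I\<in>Pow {1..n}. \<Sum>\<mu>\<in>L. of_bool (\<mu> \<in> mink_sum P I) * (-1) ^ card I)"
    unfolding discrete_mixed_volume_signed
    by (intro sum.cong) (auto simp: volume sum_distrib_left mult.commute)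
  also have "\<dots> = (\<Sum>\<mu>\<in>L. reduced_euler_char (minkowski_complex P n \<mu>))"
    using assms(1) by (subst sum.swap) (simp add: reduced_euler_char_minkowski_complex)
  finally show ?thesis
    unfolding L_def .
qed

end
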